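(* Consider a pullback square in $\mathsf{PreOrdGrp}$ $(p_2,\bar p_2)\colon(P,P_P)\to(G,P_G)$, $(p_1,\bar p_1)\colon(P,P_P)\to(E,P_E)$, $(f,\bar f)\colon(G,P_G)\to(H,P_H)$, $(p,\bar p)\colon(E,P_E)\to(H,P_H)$, with $(f,\bar f)\circ(p_2,\bar p_2)=(p,\bar p)\circ(p_1,\bar p_1)$, in which all four arrows are regular epimorphisms. Then: (1) if Condition $(\star)$ holds for $(f,\bar f)$, then it holds for $(p_1,\bar p_1)$; (2) if $(p,\bar p)=(f,\bar f)$ (so that the square is the kernel pair of $(f,\bar f)$), then Condition $(\star)$ holds for $(p_1,\bar p_1)$ if and only if it holds for $(f,\bar f)$.
   Context: A preordered group is a pair $(G,P_G)$ with $G$ an additively written group and $P_G\subseteq G$ a submonoid closed under conjugation; morphisms are group homomorphisms $f$ with $f(P_G)\subseteq P_H$, $\bar f$ denoting the restriction to positive cones. This is $\mathsf{PreOrdGrp}$. Pullbacks are computed componentwise: $P=E\times_H G$ and $P_P=P_E\times_{P_H}P_G$. Regular epimorphisms are the morphisms with $f$ and $\bar f$ surjective. For a group $G$, $\eta_G\colon G\to G/[G,G]$ is the abelianization quotient. A morphism $(f,\bar f)\colon(G,P_G)\to(H,P_H)$ satisfies Condition $(\star)$ if for all $a,b,c\in P_G$ with $\eta_G(a)=\eta_G(b)$ and $f(b)=f(c)$, one has $a-b+c\in P_G$. *)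

theory Defs
  imports "HOL-Algebra.Algebra"
begin

text \<open>Groups are HOL-Algebra groups (written multiplicatively; the paper's additive
  a - b + c becomes a \<otimes> inv b \<otimes> c). A preordered group is a group together with a
  positive cone PG: a submonoid closed under conjugation.\<close>

definition preord_group :: "('a, 'm) monoid_scheme \<Rightarrow> 'a set \<Rightarrow> bool" where
  "preord_group G PG \<longleftrightarrow> group G \<and> PG \<subseteq> carrier G \<and> \<one>\<^bsub>G\<^esub> \<in> PG
     \<and> (\<forall>x\<in>PG. \<forall>y\<in>PG. x \<otimes>\<^bsub>G\<^esub> y \<in> PG)
     \<and> (\<forall>g\<in>carrier G. \<forall>x\<in>PG. g \<otimes>\<^bsub>G\<^esub> x \<otimes>\<^bsub>G\<^esub> inv\<^bsub>G\<^esub> g \<in> PG)"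

definition preord_hom :: "('a, 'm) monoid_scheme \<Rightarrow> 'a set \<Rightarrow> ('b, 'n) monoid_scheme \<Rightarrow> 'b set
    \<Rightarrow> ('a \<Rightarrow> 'b) \<Rightarrow> bool" where
  "preord_hom G PG H PH f \<longleftrightarrow> f \<in> hom G H \<and> f ` PG \<subseteq> PH"

definition preord_regepi :: "('a, 'm) monoid_scheme \<Rightarrow> 'a set \<Rightarrow> ('b, 'n) monoid_scheme \<Rightarrow> 'b set
    \<Rightarrow> ('a \<Rightarrow> 'b) \<Rightarrow> bool" where
  "preord_regepi G PG H PH f \<longleftrightarrow> preord_hom G PG H PH f \<and> f ` carrier G = carrier H \<and> f ` PG = PH"

definition abel_eta :: "('a, 'm) monoid_scheme \<Rightarrow> 'a \<Rightarrow> 'a set" where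
  "abel_eta G x = derived G (carrier G) #>\<^bsub>G\<^esub> x"

definition cond_star :: "('a, 'm) monoid_scheme \<Rightarrow> 'a set \<Rightarrow> ('a \<Rightarrow> 'b) \<Rightarrow> bool" where
  "cond_star G PG f \<longleftrightarrow> (\<forall>a\<in>PG. \<forall>b\<in>PG. \<forall>c\<in>PG.
      abel_eta G a = abel_eta G b \<and> f b = f c \<longrightarrow> a \<otimes>\<^bsub>G\<^esub> inv\<^bsub>G\<^esub> b \<otimes>\<^bsub>G\<^esub> c \<in> PG)"

text \<open>A commutative square p1: P\<rightarrow>E, p2: P\<rightarrow>G, p: E\<rightarrow>H, f: G\<rightarrow>H of preordered groups
  is a pullback iff the comparison map x \<mapsto> (p1 x, p2 x) is an isomorphism onto the
  componentwise pullback E \<times>_H G with cone P_E \<times>_{P_H} P_G (limits in PreOrdGrp are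
  computed componentwise).\<close>
definition preord_pullback ::
  "('p, 'm1) monoid_scheme \<Rightarrow> 'p set \<Rightarrow> ('e, 'm2) monoid_scheme \<Rightarrow> 'e set \<Rightarrow>
   ('g, 'm3) monoid_scheme \<Rightarrow> 'g set \<Rightarrow> ('h, 'm4) monoid_scheme \<Rightarrow> 'h set \<Rightarrow>
   ('p \<Rightarrow> 'e) \<Rightarrow> ('p \<Rightarrow> 'g) \<Rightarrow> ('e \<Rightarrow> 'h) \<Rightarrow> ('g \<Rightarrow> 'h) \<Rightarrow> bool" where
  "preord_pullback P PP E PE G PG H PH p1 p2 p f \<longleftrightarrow>
     preord_group P PP \<and> preord_group E PE \<and> preord_group G PG \<and> preord_group H PH \<and>
     preord_hom P PP E PE p1 \<and> preord_hom P PP G PG p2 \<and>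
     preord_hom E PE H PH p \<and> preord_hom G PG H PH f \<and>
     (\<forall>x\<in>carrier P. f (p2 x) = p (p1 x)) \<and>
     bij_betw (\<lambda>x. (p1 x, p2 x)) (carrier P) {(e, g). e \<in> carrier E \<and> g \<in> carrier G \<and> p e = f g} \<and>
     (\<forall>x\<in>carrier P. x \<in> PP \<longleftrightarrow> p1 x \<in> PE \<and> p2 x \<in> PG)"

end

theory Submission
  imports Defs
begin

text \<open>For (1), an element a - b + c of the pullback is tested componentwise: its
  E-component collapses to p1 a because p1 b = p1 c, and its G-component is the
  corresponding combination of positives of G, covered by Condition (\<star>) for f since
  homomorphisms preserve abelianization classes. For the converse in (2), the diagonal
  K \<rightarrow> Q of the kernel pair lifts a, b to positive elements of Q, and a pair (b, c) with
  g b = g c is itself a positive element of Q; Condition (\<star>) for q1 applied to these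
  three elements and projected along q2 gives the claim.\<close>

lemma (in group) rcos_eq_iff_mult_inv_mem:
  assumes "subgroup S G" "a \<in> carrier G" "b \<in> carrier G"
  shows "S #> a = S #> b \<longleftrightarrow> a \<otimes> inv b \<in> S"
proof
  assume "S #> a = S #> b"
  then have "a \<in> S #> b"
    using rcos_self[OF assms(2,1)] by simp
  then show "a \<otimes> inv b \<in> S"
    using subgroup.rcos_module_imp[OF assms(1) is_group assms(3)] by blast
next
  assume "a \<otimes> inv b \<in> S"
  then have "a \<in> S #> b"
    using subgroup.rcos_module_rev[OF assms(1) is_group assms(3,2)] by blast
  then show "S #> a = S #> b"
    using repr_independence[OF _ assms(3,1)] by metis
qed

lemma (in group) abel_eta_eq_iff:
  assumes "a \<in> carrier G" "b \<in> carrier G"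
  shows "abel_eta G a = abel_eta G b \<longleftrightarrow> a \<otimes> inv b \<in> derived G (carrier G)"
  unfolding abel_eta_def
  by (rule rcos_eq_iff_mult_inv_mem[OF derived_is_subgroup assms]) simp

lemma (in group_hom) derived_img_subset:
  "h ` derived G (carrier G) \<subseteq> derived H (carrier H)"
proof -
  have "h ` derived G (carrier G) = derived H (h ` carrier G)"
    by (rule derived_img[symmetric]) simp
  also have "\<dots> \<subseteq> derived H (carrier H)"
    by (rule H.mono_derived) auto
  finally show ?thesis .
qed

lemma (in group_hom) hom_mult_inv_mult:
  assumes "a \<in> carrier G" "b \<in> carrier G" "c \<in> carrier G"
  shows "h (a \<otimes> inv b \<otimes> c) = h a \<otimes>\<^bsub>H\<^esub> inv\<^bsub>H\<^esub> h b \<otimes>\<^bsub>H\<^esub> h c"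
  using assms by simp

lemma (in group_hom) abel_eta_img:
  assumes "a \<in> carrier G" "b \<in> carrier G" "abel_eta G a = abel_eta G b"
  shows "abel_eta H (h a) = abel_eta H (h b)"
proof -
  have "a \<otimes> inv b \<in> derived G (carrier G)"
    using G.abel_eta_eq_iff assms by blast
  then have "h a \<otimes>\<^bsub>H\<^esub> inv\<^bsub>H\<^esub> h b \<in> derived H (carrier H)"
    using derived_img_subset assms(1,2) by force
  then show ?thesis
    using H.abel_eta_eq_iff assms(1,2) by simp
qed

lemma preord_hom_group_hom:
  assumes "preord_group G PG" "preord_group H PH" "preord_hom G PG H PH f"
  shows "group_hom G H f"
  using assms unfolding preord_group_def preord_hom_def
  by (simp add: group_hom_def group_hom_axioms_def)

lemma preord_pullback_pairE:
  assumes "preord_pullback P PP E PE G PG H PH p1 p2 p f"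
    and "e \<in> carrier E" "g \<in> carrier G" "p e = f g"
  obtains x where "x \<in> carrier P" "p1 x = e" "p2 x = g"
proof -
  have "(e, g) \<in> (\<lambda>x. (p1 x, p2 x)) ` carrier P"
    using assms unfolding preord_pullback_def bij_betw_def by auto
  then show ?thesis using that by auto
qed

lemma preord_pullback_eqI:
  assumes "preord_pullback P PP E PE G PG H PH p1 p2 p f"
    and "x \<in> carrier P" "y \<in> carrier P" "p1 x = p1 y" "p2 x = p2 y"
  shows "x = y"
  using assms unfolding preord_pullback_def bij_betw_def inj_on_def by auto

lemma preord_pullback_lift:
  assumes pb: "preord_pullback P PP E PE G PG H PH p1 p2 p f"
    and M: "monoid M" and u: "u \<in> hom M E" and v: "v \<in> hom M G"
    and comm: "\<forall>x\<in>carrier M. p (u x) = f (v x)"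
  obtains w where "w \<in> hom M P" "\<forall>x\<in>carrier M. p1 (w x) = u x \<and> p2 (w x) = v x"
proof -
  define w where "w x = (SOME y. y \<in> carrier P \<and> p1 y = u x \<and> p2 y = v x)" for x
  have w: "w x \<in> carrier P \<and> p1 (w x) = u x \<and> p2 (w x) = v x" if "x \<in> carrier M" for x
    unfolding w_def
    by (rule someI_ex, rule preord_pullback_pairE[OF pb, of "u x" "v x"])
       (use that u v comm hom_in_carrier in auto)
  from pb have hom1: "p1 \<in> hom P E" and hom2: "p2 \<in> hom P G"
    unfolding preord_pullback_def preord_hom_def by auto
  have "w \<in> hom M P"
  proof (rule homI)
    fix x y assume xy: "x \<in> carrier M" "y \<in> carrier M"
    then have "x \<otimes>\<^bsub>M\<^esub> y \<in> carrier M"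
      using M by (simp add: monoid.m_closed)
    moreover have "w x \<otimes>\<^bsub>P\<^esub> w y \<in> carrier P"
      using pb w xy unfolding preord_pullback_def preord_group_def by (simp add: group.is_monoid monoid.m_closed)
    ultimately show "w (x \<otimes>\<^bsub>M\<^esub> y) = w x \<otimes>\<^bsub>P\<^esub> w y"
      by (intro preord_pullback_eqI[OF pb]) (use w xy u v hom1 hom2 in \<open>simp_all add: hom_mult\<close>)
  qed (use w in auto)
  then show ?thesis using that w by blast
qed

lemma cond_star_pullback:
  assumes pb: "preord_pullback P PP E PE G PG H PH p1 p2 p f"
    and star: "cond_star G PG f"
  shows "cond_star P PP p1"
  unfolding cond_star_def
proof (intro ballI impI)
  fix a b c assume pos: "a \<in> PP" "b \<in> PP" "c \<in> PP"
    and eq: "abel_eta P a = abel_eta P b \<and> p1 b = p1 c"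
  from pb have groups: "preord_group P PP" "preord_group E PE" "preord_group G PG"
    and homs: "preord_hom P PP E PE p1" "preord_hom P PP G PG p2"
    and comm: "\<forall>x\<in>carrier P. f (p2 x) = p (p1 x)"
    and cone: "\<forall>x\<in>carrier P. x \<in> PP \<longleftrightarrow> p1 x \<in> PE \<and> p2 x \<in> PG"
    unfolding preord_pullback_def by auto
  interpret p1: group_hom P E p1 by (rule preord_hom_group_hom[OF groups(1,2) homs(1)])
  interpret p2: group_hom P G p2 by (rule preord_hom_group_hom[OF groups(1,3) homs(2)])
  have carr: "a \<in> carrier P" "b \<in> carrier P" "c \<in> carrier P"
    using pos groups(1) unfolding preord_group_def by auto
  have pos1: "p1 ` PP \<subseteq> PE" and pos2: "p2 ` PP \<subseteq> PG"
    using homs unfolding preord_hom_def by auto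
  let ?x = "a \<otimes>\<^bsub>P\<^esub> inv\<^bsub>P\<^esub> b \<otimes>\<^bsub>P\<^esub> c"
  have "p1 ?x = p1 a"
    using carr eq by (simp add: p1.hom_mult_inv_mult p1.H.m_assoc)
  then have "p1 ?x \<in> PE"
    using pos pos1 by auto
  moreover have "p2 ?x \<in> PG"
  proof -
    have "abel_eta G (p2 a) = abel_eta G (p2 b)"
      using p2.abel_eta_img carr eq by blast
    moreover have "f (p2 b) = f (p2 c)"
      using comm carr eq by simp
    ultimately show ?thesis
      using star pos pos2 carr unfolding cond_star_def by (simp add: p2.hom_mult_inv_mult image_subset_iff)
  qed
  ultimately show "?x \<in> PP"
    using cone carr by simp
qed

lemma cond_star_of_kernel_pair:
  assumes pb: "preord_pullback Q PQ K PK K PK L PL q1 q2 g g"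
    and star: "cond_star Q PQ q1"
  shows "cond_star K PK g"
  unfolding cond_star_def
proof (intro ballI impI)
  fix a b c assume pos: "a \<in> PK" "b \<in> PK" "c \<in> PK"
    and eq: "abel_eta K a = abel_eta K b \<and> g b = g c"
  from pb have groups: "preord_group Q PQ" "preord_group K PK"
    and hom2: "preord_hom Q PQ K PK q2"
    and cone: "\<forall>x\<in>carrier Q. x \<in> PQ \<longleftrightarrow> q1 x \<in> PK \<and> q2 x \<in> PK"
    unfolding preord_pullback_def by auto
  interpret q2: group_hom Q K q2 by (rule preord_hom_group_hom[OF groups hom2])
  have carr_PK: "PK \<subseteq> carrier K"
    using groups(2) unfolding preord_group_def by simp
  then have carr: "a \<in> carrier K" "b \<in> carrier K" "c \<in> carrier K"
    using pos by auto
  have id: "(\<lambda>k. k) \<in> hom K K"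
    by (rule homI) auto
  obtain d where d: "d \<in> hom K Q" "\<forall>k\<in>carrier K. q1 (d k) = k \<and> q2 (d k) = k"
    by (rule preord_pullback_lift[OF pb q2.H.is_monoid id id]) auto
  have diag: "preord_hom K PK Q PQ d"
    unfolding preord_hom_def
  proof (intro conjI image_subsetI)
    fix k assume "k \<in> PK"
    then show "d k \<in> PQ"
      using d cone carr_PK hom_in_carrier by (metis subsetD)
  qed (rule d(1))
  interpret d: group_hom K Q d by (rule preord_hom_group_hom[OF groups(2,1) diag])
  obtain z where z: "z \<in> carrier Q" "q1 z = b" "q2 z = c"
    using preord_pullback_pairE[OF pb carr(2,3)] eq by blast
  have "d a \<otimes>\<^bsub>Q\<^esub> inv\<^bsub>Q\<^esub> d b \<otimes>\<^bsub>Q\<^esub> z \<in> PQ"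
  proof -
    have "d a \<in> PQ" "d b \<in> PQ" "z \<in> PQ"
      using diag pos cone z by (auto simp: preord_hom_def)
    moreover have "abel_eta Q (d a) = abel_eta Q (d b)"
      using d.abel_eta_img carr eq by blast
    moreover have "q1 (d b) = q1 z"
      using d carr z by simp
    ultimately show ?thesis
      using star unfolding cond_star_def by blast
  qed
  moreover have "q2 (d a \<otimes>\<^bsub>Q\<^esub> inv\<^bsub>Q\<^esub> d b \<otimes>\<^bsub>Q\<^esub> z) = a \<otimes>\<^bsub>K\<^esub> inv\<^bsub>K\<^esub> b \<otimes>\<^bsub>K\<^esub> c"
    using d carr z by (simp add: q2.hom_mult_inv_mult)
  ultimately show "a \<otimes>\<^bsub>K\<^esub> inv\<^bsub>K\<^esub> b \<otimes>\<^bsub>K\<^esub> c \<in> PK"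
    using hom2 unfolding preord_hom_def by force
qed

theorem lemma2p7:
  fixes P :: "('p, 'm1) monoid_scheme" and E :: "('e, 'm2) monoid_scheme"
    and G :: "('g, 'm3) monoid_scheme" and H :: "('h, 'm4) monoid_scheme"
  shows "(preord_pullback P PP E PE G PG H PH p1 p2 p f \<and>
          preord_regepi P PP E PE p1 \<and> preord_regepi P PP G PG p2 \<and>
          preord_regepi E PE H PH p \<and> preord_regepi G PG H PH f \<and>
          cond_star G PG f \<longrightarrow> cond_star P PP p1)
       \<and> (\<forall>(Q :: ('q, 'm5) monoid_scheme) PQ q1 q2 (K :: ('k, 'm6) monoid_scheme) PK
              (L :: ('l, 'm7) monoid_scheme) PL (g :: 'k \<Rightarrow> 'l).
            preord_pullback Q PQ K PK K PK L PL q1 q2 g g \<and>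
            preord_regepi Q PQ K PK q1 \<and> preord_regepi Q PQ K PK q2 \<and>
            preord_regepi K PK L PL g \<longrightarrow>
            (cond_star Q PQ q1 \<longleftrightarrow> cond_star K PK g))"
proof (intro conjI allI impI)
  show "cond_star P PP p1"
    if "preord_pullback P PP E PE G PG H PH p1 p2 p f \<and>
        preord_regepi P PP E PE p1 \<and> preord_regepi P PP G PG p2 \<and>
        preord_regepi E PE H PH p \<and> preord_regepi G PG H PH f \<and> cond_star G PG f"
    using that cond_star_pullback by blast
next
  fix Q :: "('q, 'm5) monoid_scheme" and PQ q1 q2 and K :: "('k, 'm6) monoid_scheme" and PK
    and L :: "('l, 'm7) monoid_scheme" and PL and g :: "'k \<Rightarrow> 'l"
  assume "preord_pullback Q PQ K PK K PK L PL q1 q2 g g \<and>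
          preord_regepi Q PQ K PK q1 \<and> preord_regepi Q PQ K PK q2 \<and>
          preord_regepi K PK L PL g"
  then have pb: "preord_pullback Q PQ K PK K PK L PL q1 q2 g g" by blast
  show "cond_star Q PQ q1 \<longleftrightarrow> cond_star K PK g"
    using cond_star_pullback[OF pb] cond_star_of_kernel_pair[OF pb] by blast
qed

end
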